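(* The Poincar\'e series of $\mathrm{Kh}_{alg}(3,\infty;\mathbb{Q})$ is $$P_{3,\infty}(q,t)=\frac{(1+q^{10}t^5)(1+q^2+q^4t^2)}{1-q^6t^4}+q^8t^3.$$
   Context: For $n\ge1$, $A_n(\mathbb{Q})=\mathbb{Q}[x_0,\dots,x_{n-1}]\otimes\Lambda[\xi_0,\dots,\xi_{n-1}]$ is the free graded-commutative algebra on even $x_k$ (of $q$-degree $2k+2$, $t$-degree $2k$) and odd $\xi_k$ (of $q$-degree $2k+4$, $t$-degree $2k+1$), with $d_2$ the odd derivation given by $d_2(x_k)=0$, $d_2(\xi_k)=\sum_{i=0}^k x_ix_{k-i}$. $\mathrm{Kh}_{alg}(n,\infty;\mathbb{Q})=H(A_n(\mathbb{Q}),d_2)$, and its Poincar\'e series is $\sum_{a,b}\dim \mathrm{Kh}_{alg}^{a,b}\,q^at^b$ ($a$ = $q$-degree, $b$ = $t$-degree). *)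

theory Defs
  imports Main "HOL-Library.Function_Algebras" "HOL-Computational_Algebra.Formal_Power_Series"
begin

text \<open>A monomial x^e \<xi>_S of A_n: e = exponent vector of the even generators x_k,
  S = set of indices of the odd generators \<xi>_k, ordered increasingly
  \<xi>_{s1} \<xi>_{s2} ... with s1 < s2 < ...\<close>
type_synonym mon = "(nat \<Rightarrow> nat) \<times> nat set"

definition qdeg :: "mon \<Rightarrow> nat" where
  "qdeg m = (\<Sum>k\<in>{k. fst m k \<noteq> 0}. fst m k * (2*k+2)) + (\<Sum>k\<in>snd m. 2*k+4)"

definition tdeg :: "mon \<Rightarrow> nat" where
  "tdeg m = (\<Sum>k\<in>{k. fst m k \<noteq> 0}. fst m k * (2*k)) + (\<Sum>k\<in>snd m. 2*k+1)"

definition mons :: "nat \<Rightarrow> nat \<Rightarrow> nat \<Rightarrow> mon set" where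
  "mons n a b = {m. (\<forall>k. n \<le> k \<longrightarrow> fst m k = 0) \<and> snd m \<subseteq> {..<n}
                    \<and> qdeg m = a \<and> tdeg m = b}"

definition unitv :: "nat \<Rightarrow> nat \<Rightarrow> nat" where
  "unitv i = (\<lambda>k. if k = i then 1 else 0)"

text \<open>Coefficient of the monomial m' in d_2(m): the odd derivation with
  d_2(x_k) = 0, d_2(\<xi>_s) = \<Sum>_{i=0}^s x_i x_{s-i}; the Koszul sign of
  differentiating \<xi>_s inside \<xi>_S is (-1)^(number of elements of S below s).\<close>
definition dcoef :: "mon \<Rightarrow> mon \<Rightarrow> rat" where
  "dcoef m m' = (\<Sum>s\<in>snd m.
      if snd m' = snd m - {s} then
        (-1) ^ card {j\<in>snd m. j < s} *
        (\<Sum>i\<le>s. if fst m' = (\<lambda>k. fst m k + unitv i k + unitv (s - i) k) then 1 else 0)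
      else 0)"

text \<open>Elements of A_n(Q) are finitely supported rational combinations of monomials.\<close>
definition d2 :: "(mon \<Rightarrow> rat) \<Rightarrow> (mon \<Rightarrow> rat)" where
  "d2 f = (\<lambda>m'. \<Sum>m\<in>{m. f m \<noteq> 0}. f m * dcoef m m')"

definition Apiece :: "nat \<Rightarrow> nat \<Rightarrow> nat \<Rightarrow> (mon \<Rightarrow> rat) set" where
  "Apiece n a b = {f. \<forall>m. f m \<noteq> 0 \<longrightarrow> m \<in> mons n a b}"

definition qscale :: "rat \<Rightarrow> (mon \<Rightarrow> rat) \<Rightarrow> (mon \<Rightarrow> rat)" where
  "qscale c f = (\<lambda>m. c * f m)"

text \<open>dim Kh_alg^{a,b}(n,\<infinity>;Q) = dim (ker d_2 on A^{a,b}) - dim (d_2(A^{a,b+1})),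
  (d_2 preserves q-degree and lowers t-degree by 1).\<close>
definition dimKh :: "nat \<Rightarrow> nat \<Rightarrow> nat \<Rightarrow> nat" where
  "dimKh n a b =
     vector_space.dim qscale {f\<in>Apiece n a b. d2 f = (\<lambda>_. 0)}
     - vector_space.dim qscale (d2 ` Apiece n a (b+1))"

definition PoincareKh :: "nat \<Rightarrow> rat fps fps" where
  "PoincareKh n = Abs_fps (\<lambda>a. Abs_fps (\<lambda>b. of_nat (dimKh n a b)))"

definition qvar :: "rat fps fps" where "qvar = fps_X"
definition tvar :: "rat fps fps" where "tvar = fps_const fps_X"

end

theory Submission
  imports Defs "HOL-Library.Product_Lexorder"
begin

text \<open>
  The differential preserves the q-degree and lowers the t-degree by one, and every bigraded piece
  of \<open>A\<^sub>3\<close> is finite-dimensional. The monomials of \<open>A\<^sub>3\<close> fall into three classes: sources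
  \<open>m\<close>; pivots, i.e. leading monomials of \<open>d\<^sub>2 m\<close> for a source \<open>m\<close> (with respect to a fixed order),
  each the pivot of exactly one source; and critical monomials, namely \<open>x\<^sub>2\<^sup>c\<close> times one of
  \<open>1, x\<^sub>0, x\<^sub>1, x\<^sub>1\<xi>\<^sub>0, x\<^sub>1\<xi>\<^sub>1, x\<^sub>0x\<^sub>1\<xi>\<^sub>1\<close>. The boundaries \<open>d\<^sub>2 m\<close> of the sources, and one cycle with
  leading monomial \<open>p\<close> for every critical \<open>p\<close>, form triangular and hence independent families.
  Rank-nullity then squeezes \<open>dim Kh\<^sup>q\<^sup>,\<^sup>t\<close> to the number of critical monomials of bidegree
  \<open>(q, t)\<close>, and multiplication by \<open>x\<^sub>2\<close> (bidegree \<open>q\<^sup>6t\<^sup>4\<close>) gives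
  \<open>P \<cdot> (1 - q\<^sup>6t\<^sup>4) = 1 + q\<^sup>2 + q\<^sup>4t\<^sup>2 + q\<^sup>8t\<^sup>3 + q\<^sup>1\<^sup>0t\<^sup>5 + q\<^sup>1\<^sup>2t\<^sup>5\<close>.
\<close>

section \<open>Linear algebra\<close>

lemma sum_apply: "(\<Sum>i\<in>A. f i) x = (\<Sum>i\<in>A. f i x)"
  by (induct A rule: infinite_finite_induct) auto

context Vector_Spaces.linear
begin

lemma disjoint_kernel_independent_image:
  assumes "\<And>x. x \<in> K \<Longrightarrow> f x = 0" and "vs2.independent (f ` G)"
  shows "K \<inter> G = {}"
proof -
  have "0 \<notin> f ` G" using assms(2) vs2.dependent_zero by blast
  with assms(1) show ?thesis by (metis disjoint_iff imageI)
qed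

lemma independent_Un_kernel:
  assumes fin: "finite K" "finite G"
    and K: "vs1.independent K" "\<And>x. x \<in> K \<Longrightarrow> f x = 0"
    and G: "vs2.independent (f ` G)" "inj_on f G"
  shows "vs1.independent (K \<union> G)"
proof (rule vs1.independent_if_scalars_zero)
  show "finite (K \<union> G)" using fin by simp
  fix c v
  assume sum0: "(\<Sum>x\<in>K \<union> G. s1 (c x) x) = 0" and v: "v \<in> K \<union> G"
  have "K \<inter> G = {}" by (rule disjoint_kernel_independent_image[OF K(2) G(1)])
  then have split: "(\<Sum>x\<in>K. s1 (c x) x) + (\<Sum>x\<in>G. s1 (c x) x) = 0"
    using sum0 fin by (simp add: sum.union_disjoint)
  have "f (\<Sum>x\<in>K. s1 (c x) x) = 0" by (simp add: sum scale K(2))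
  then have "0 = f (\<Sum>x\<in>G. s1 (c x) x)"
    using arg_cong[OF split, of f] by (simp add: add)
  also have "\<dots> = (\<Sum>y\<in>f ` G. s2 (c (the_inv_into G f y)) y)"
    by (simp add: sum scale sum.reindex[OF G(2)] the_inv_into_f_f[OF G(2)])
  finally have sumG: "(\<Sum>y\<in>f ` G. s2 (c (the_inv_into G f y)) y) = 0" ..
  have cG: "c x = 0" if "x \<in> G" for x
  proof -
    have "c (the_inv_into G f (f x)) = 0"
      using vs2.independentD[OF G(1) finite_imageI[OF fin(2)] order_refl,
          where u = "\<lambda>y. c (the_inv_into G f y)", OF sumG] that by blast
    then show ?thesis using the_inv_into_f_f[OF G(2) that] by simp
  qed
  then have "(\<Sum>x\<in>K. s1 (c x) x) = 0" using split by simp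
  then have "c x = 0" if "x \<in> K" for x
    using vs1.independentD[OF K(1) fin(1) order_refl] that by blast
  with cG v show "c v = 0" by blast
qed

lemma dim_kernel_add_dim_image_le:
  assumes F: "finite F" and W: "W \<subseteq> vs1.span F"
  shows "vs1.dim {x\<in>W. f x = 0} + vs2.dim (f ` W) \<le> card F"
proof -
  obtain K where K: "K \<subseteq> {x\<in>W. f x = 0}" "vs1.independent K" "card K = vs1.dim {x\<in>W. f x = 0}"
    by (metis vs1.basis_exists)
  obtain R where R: "R \<subseteq> f ` W" "vs2.independent R" "card R = vs2.dim (f ` W)"
    by (metis vs2.basis_exists)
  define G where "G = inv_into W f ` R"
  have GW: "G \<subseteq> W" using R(1) by (auto simp: G_def inv_into_into)
  have fG: "f ` G = R" using R(1) by (force simp: G_def f_inv_into_f)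
  have finK: "finite K" using vs1.independent_span_bound[OF F K(2)] K(1) W by blast
  have finR: "finite R"
    using vs2.independent_span_bound[OF finite_imageI[OF F] R(2)] R(1) W spans_image by blast
  have cardG: "card G = card R" using R(1) by (simp add: G_def card_image inj_on_inv_into)
  have finG: "finite G" using finR by (simp add: G_def)
  have injG: "inj_on f G" using fG cardG finG by (intro eq_card_imp_inj_on) simp_all
  have "vs1.independent (K \<union> G)"
    using independent_Un_kernel[OF finK finG K(2) _ _ injG] K(1) R(2) fG by auto
  then have "card (K \<union> G) \<le> card F"
    using vs1.independent_span_bound[OF F] K(1) GW W by blast
  moreover have "K \<inter> G = {}"
    using disjoint_kernel_independent_image[of K G] K(1) R(2) fG by blast
  ultimately show ?thesis using K R cardG finK finG by (simp add: card_Un_disjoint)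
qed

end

context vector_space
begin

lemma card_le_dim_if_independent:
  assumes "independent B" "B \<subseteq> W" "W \<subseteq> span F" "finite F"
  shows "card B \<le> dim W"
proof -
  obtain C where C: "C \<subseteq> W" "independent C" "W \<subseteq> span C" "card C = dim W"
    by (rule basis_exists)
  have "finite C" using independent_span_bound[OF assms(4) C(2)] C(1) assms(3) by blast
  then show ?thesis using independent_span_bound[OF _ assms(1)] assms(2) C by fastforce
qed

end

interpretation V: vector_space qscale
  by unfold_locales (auto simp: qscale_def fun_eq_iff algebra_simps)

lemma qscale_apply [simp]: "qscale c f x = c * f x"
  by (simp add: qscale_def)

definition supported_on :: "mon set \<Rightarrow> (mon \<Rightarrow> rat) set" where
  "supported_on F = {f. \<forall>m. f m \<noteq> 0 \<longrightarrow> m \<in> F}"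

definition unit_vec :: "mon \<Rightarrow> mon \<Rightarrow> rat" where
  "unit_vec m = (\<lambda>m'. if m' = m then 1 else 0)"

lemma Apiece_eq_supported_on: "Apiece n a b = supported_on (mons n a b)"
  by (simp add: Apiece_def supported_on_def)

lemma supported_on_eq_sum_unit_vec:
  assumes "finite F" "f \<in> supported_on F"
  shows "f = (\<Sum>m\<in>F. qscale (f m) (unit_vec m))"
proof
  fix x
  have "(\<Sum>m\<in>F. qscale (f m) (unit_vec m)) x = (\<Sum>m\<in>F. if x = m then f m else 0)"
    by (simp add: sum_apply unit_vec_def if_distrib cong: if_cong)
  also have "\<dots> = (if x \<in> F then f x else 0)" using assms(1) by (simp add: sum.delta')
  also have "\<dots> = f x" using assms(2) unfolding supported_on_def mem_Collect_eq by metis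
  finally show "f x = (\<Sum>m\<in>F. qscale (f m) (unit_vec m)) x" ..
qed

lemma supported_on_subset_span:
  assumes "finite F"
  shows "supported_on F \<subseteq> V.span (unit_vec ` F)"
proof
  fix f assume "f \<in> supported_on F"
  then have "f = (\<Sum>m\<in>F. qscale (f m) (unit_vec m))"
    by (rule supported_on_eq_sum_unit_vec[OF assms])
  also have "\<dots> \<in> V.span (unit_vec ` F)" by (intro V.span_sum V.span_scale V.span_base) simp
  finally show "f \<in> V.span (unit_vec ` F)" .
qed

text \<open>\<open>d2\<close> is linear only on finitely supported vectors (its defining sum is junk otherwise);
  there it agrees with the linear map \<open>d2_on F\<close> for any finite \<open>F\<close> containing the support.\<close>

definition d2_on :: "mon set \<Rightarrow> (mon \<Rightarrow> rat) \<Rightarrow> mon \<Rightarrow> rat" where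
  "d2_on F f = (\<lambda>m'. \<Sum>m\<in>F. f m * dcoef m m')"

lemma linear_d2_on: "Vector_Spaces.linear qscale qscale (d2_on F)"
  by (unfold_locales; simp add: d2_on_def fun_eq_iff algebra_simps sum.distrib sum_distrib_left)

lemma d2_eq_d2_on:
  assumes "finite F" "f \<in> supported_on F"
  shows "d2 f = d2_on F f"
  unfolding d2_def d2_on_def
  using assms by (intro ext sum.mono_neutral_left) (auto simp: supported_on_def)

lemma d2_unit_vec: "d2 (unit_vec m) = dcoef m"
  using d2_eq_d2_on[of "{m}" "unit_vec m"] by (simp add: supported_on_def unit_vec_def d2_on_def)

lemma dim_cycles_add_dim_boundaries_le:
  assumes "finite F"
  shows "V.dim {f\<in>supported_on F. d2 f = (\<lambda>_. 0)} + V.dim (d2 ` supported_on F) \<le> card F"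
proof -
  interpret d: Vector_Spaces.linear qscale qscale "d2_on F" by (rule linear_d2_on)
  have "{f\<in>supported_on F. d2 f = (\<lambda>_. 0)} = {f\<in>supported_on F. d2_on F f = 0}"
    and "d2 ` supported_on F = d2_on F ` supported_on F"
    using d2_eq_d2_on[OF assms] by (auto simp: zero_fun_def)
  moreover have "card (unit_vec ` F) \<le> card F" using assms by (rule card_image_le)
  ultimately show ?thesis
    using d.dim_kernel_add_dim_image_le[OF finite_imageI[OF assms]
        supported_on_subset_span[OF assms]] by simp
qed

lemma vanishes_on_span:
  assumes "\<And>v. v \<in> S \<Longrightarrow> v m = 0" and "x \<in> V.span S"
  shows "x m = 0"
  using assms(2) by (induct rule: V.span_induct_alt) (simp_all add: assms(1))

context
  fixes key :: "mon \<Rightarrow> 'k::linorder" and p :: "'i \<Rightarrow> mon" and x :: "'i \<Rightarrow> mon \<Rightarrow> rat"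
    and I :: "'i set"
  assumes key_inj: "inj_on (\<lambda>i. key (p i)) I"
    and pivot: "\<And>i. i \<in> I \<Longrightarrow> x i (p i) \<noteq> 0"
    and above_pivot: "\<And>i m. i \<in> I \<Longrightarrow> key (p i) < key m \<Longrightarrow> x i m = 0"
begin

lemma triangular_inj: "inj_on x I"
proof (rule inj_onI)
  fix i j assume ij: "i \<in> I" "j \<in> I" "x i = x j"
  show "i = j"
  proof (rule linorder_cases[of "key (p i)" "key (p j)"])
    assume "key (p i) < key (p j)"
    then show ?thesis using above_pivot[OF ij(1)] pivot[OF ij(2)] ij(3) by simp
  next
    assume "key (p j) < key (p i)"
    then show ?thesis using above_pivot[OF ij(2)] pivot[OF ij(1)] ij(3) by simp
  qed (use key_inj ij in \<open>auto dest: inj_onD\<close>)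
qed

lemma triangular_independent:
  assumes "finite I"
  shows "V.independent (x ` I)"
proof -
  have "V.independent (x ` J)" if "finite J" "J \<subseteq> I" for J
    using that
  proof (induct J rule: finite_ranking_induct[where f = "\<lambda>i. key (p i)"])
    case (insert i J)
    then have iJ: "insert i J \<subseteq> I" by simp
    have vanish: "v (p i) = 0" if "v \<in> x ` (J - {i})" for v
    proof -
      obtain j where j: "j \<in> J" "j \<noteq> i" "v = x j" using \<open>v \<in> x ` (J - {i})\<close> by blast
      have "key (p j) \<noteq> key (p i)" using inj_onD[OF key_inj] iJ j by blast
      then have "key (p j) < key (p i)" using insert.hyps(2)[OF j(1)] by simp
      then show ?thesis using above_pivot iJ j by blast
    qed
    have "x i \<notin> V.span (x ` (J - {i}))"
    proof
      assume "x i \<in> V.span (x ` (J - {i}))"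
      then have "x i (p i) = 0"
        using vanishes_on_span[of "x ` (J - {i})" "p i" "x i"] vanish by blast
      with pivot iJ show False by blast
    qed
    moreover have "V.independent (x ` (J - {i}))"
    proof (rule V.independent_mono)
      show "V.independent (x ` J)" using insert.hyps(3) iJ by blast
    qed blast
    moreover have "x ` insert i J = insert (x i) (x ` (J - {i}))" by blast
    ultimately show ?case by (metis V.independent_insertI)
  qed (simp add: V.independent_empty)
  then show ?thesis using assms by blast
qed

end

lemma card_le_dim_if_triangular:
  fixes key :: "mon \<Rightarrow> 'k::linorder" and x :: "'i \<Rightarrow> mon \<Rightarrow> rat"
  assumes "finite I" "inj_on (\<lambda>i. key (p i)) I"
    and "\<And>i. i \<in> I \<Longrightarrow> x i (p i) \<noteq> 0"
    and "\<And>i m. i \<in> I \<Longrightarrow> key (p i) < key m \<Longrightarrow> x i m = 0"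
    and "x ` I \<subseteq> W" "W \<subseteq> supported_on F" "finite F"
  shows "card I \<le> V.dim W"
proof -
  have "V.independent (x ` I)"
    by (rule triangular_independent[where key = key and p = p and x = x and I = I, OF assms(2-4,1)])
  then have "card (x ` I) \<le> V.dim W"
    using V.card_le_dim_if_independent assms(5-7) supported_on_subset_span[OF assms(7)] by blast
  moreover have "inj_on x I"
    by (rule triangular_inj[where key = key and p = p and x = x and I = I, OF assms(2-4)])
  ultimately show ?thesis by (simp add: card_image)
qed

section \<open>The differential on monomials\<close>

definition d2_term :: "mon \<Rightarrow> nat \<Rightarrow> nat \<Rightarrow> mon" where
  "d2_term m s i = ((\<lambda>k. fst m k + unitv i k + unitv (s - i) k), snd m - {s})"

definition koszul_sign :: "nat set \<Rightarrow> nat \<Rightarrow> rat" where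
  "koszul_sign S s = (-1) ^ card {j\<in>S. j < s}"

lemma dcoef_eq_sum:
  "dcoef m m' = (\<Sum>s\<in>snd m. koszul_sign (snd m) s * (\<Sum>i\<le>s. of_bool (m' = d2_term m s i)))"
  unfolding dcoef_def
proof (rule sum.cong[OF refl])
  fix s
  have "m' = d2_term m s i \<longleftrightarrow>
      snd m' = snd m - {s} \<and> fst m' = (\<lambda>k. fst m k + unitv i k + unitv (s - i) k)" for i
    by (cases m') (auto simp: d2_term_def)
  then show "(if snd m' = snd m - {s} then (-1) ^ card {j\<in>snd m. j < s} *
      (\<Sum>i\<le>s. if fst m' = (\<lambda>k. fst m k + unitv i k + unitv (s - i) k) then 1 else 0) else 0) =
    koszul_sign (snd m) s * (\<Sum>i\<le>s. of_bool (m' = d2_term m s i))"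
    by (simp add: koszul_sign_def of_bool_def)
qed

lemma dcoef_eq_0:
  "(\<And>s i. s \<in> snd m \<Longrightarrow> i \<le> s \<Longrightarrow> m' \<noteq> d2_term m s i) \<Longrightarrow> dcoef m m' = 0"
  unfolding dcoef_eq_sum by (auto intro!: sum.neutral)

lemma dcoef_d2_term_neq_0:
  assumes "finite (snd m)" "s \<in> snd m" "i \<le> s"
  shows "dcoef m (d2_term m s i) \<noteq> 0"
proof -
  have other: "d2_term m s i \<noteq> d2_term m s' j" if "s' \<in> snd m - {s}" for s' j
    using that assms(2) by (auto simp: d2_term_def)
  have "dcoef m (d2_term m s i) =
      koszul_sign (snd m) s * (\<Sum>j\<le>s. of_bool (d2_term m s i = d2_term m s j))"
    unfolding dcoef_eq_sum using assms(1,2) by (simp add: sum.remove other)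
  moreover have "(\<Sum>j\<le>s. of_bool (d2_term m s i = d2_term m s j)) > (0::rat)"
    using assms(3) by (intro sum_pos2[of _ i]) auto
  moreover have "koszul_sign (snd m) s \<noteq> 0" by (simp add: koszul_sign_def)
  ultimately show ?thesis by (metis mult_eq_0_iff less_irrefl)
qed

lemma koszul_sign_swap_less:
  assumes "finite S" "s \<in> S" "s' \<in> S" "s < s'"
  shows "koszul_sign S s * koszul_sign (S - {s}) s' =
    - (koszul_sign S s' * koszul_sign (S - {s'}) s)"
proof -
  have "{j\<in>S - {s}. j < s'} = {j\<in>S. j < s'} - {s}" by auto
  then have "card {j\<in>S. j < s'} = Suc (card {j\<in>S - {s}. j < s'})"
    using assms card_Suc_Diff1[of "{j\<in>S. j < s'}" s] by (simp only:) simp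
  moreover have "{j\<in>S - {s'}. j < s} = {j\<in>S. j < s}" using assms(4) by auto
  ultimately show ?thesis by (simp add: koszul_sign_def)
qed

lemma koszul_sign_swap:
  assumes "finite S" "s \<in> S" "s' \<in> S" "s \<noteq> s'"
  shows "koszul_sign S s * koszul_sign (S - {s}) s' =
    - (koszul_sign S s' * koszul_sign (S - {s'}) s)"
  using assms koszul_sign_swap_less[of S s s'] koszul_sign_swap_less[of S s' s]
  by (cases "s < s'") auto

lemma d2_term_commute: "d2_term (d2_term m s i) s' j = d2_term (d2_term m s' j) s i"
  by (auto simp: d2_term_def Diff_insert2[symmetric] insert_commute)

lemma sum_swap_antisym_eq_0:
  fixes g :: "'a \<times> 'a \<Rightarrow> 'b::linordered_ab_group_add"
  assumes "finite P" "\<And>p. p \<in> P \<Longrightarrow> prod.swap p \<in> P" "\<And>p. p \<in> P \<Longrightarrow> g (prod.swap p) = - g p"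
  shows "sum g P = 0"
proof -
  have "sum g P = sum (g \<circ> prod.swap) P"
    by (rule sum.reindex_bij_witness[where i=prod.swap and j=prod.swap]) (auto simp: assms(2))
  also have "\<dots> = - sum g P" by (simp add: assms(3) sum_negf)
  finally show ?thesis by simp
qed

lemma sum_dcoef_mult:
  assumes "finite (snd m)"
    and T: "T = (\<lambda>(s, i). d2_term m s i) ` (SIGMA s:snd m. {..s})"
  shows "(\<Sum>m'\<in>T. dcoef m m' * h m') =
    (\<Sum>s\<in>snd m. koszul_sign (snd m) s * (\<Sum>i\<le>s. h (d2_term m s i)))"
proof -
  let ?c = "koszul_sign (snd m)"
  have finT: "finite T" using assms by simp
  have "(\<Sum>m'\<in>T. dcoef m m' * h m') =
      (\<Sum>m'\<in>T. \<Sum>s\<in>snd m. \<Sum>i\<le>s. ?c s * (of_bool (m' = d2_term m s i) * h m'))"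
    by (simp only: dcoef_eq_sum sum_distrib_left sum_distrib_right mult.assoc)
  also have "\<dots> = (\<Sum>s\<in>snd m. \<Sum>m'\<in>T. \<Sum>i\<le>s. ?c s * (of_bool (m' = d2_term m s i) * h m'))"
    by (rule sum.swap)
  also have "\<dots> = (\<Sum>s\<in>snd m. \<Sum>i\<le>s. \<Sum>m'\<in>T. ?c s * (of_bool (m' = d2_term m s i) * h m'))"
    by (rule sum.cong[OF refl], rule sum.swap)
  also have "\<dots> = (\<Sum>s\<in>snd m. \<Sum>i\<le>s. ?c s * h (d2_term m s i))"
  proof (intro sum.cong refl)
    fix s i assume "s \<in> snd m" "i \<in> {..s}"
    then have "d2_term m s i \<in> T" using T by force
    moreover have "?c s * (of_bool (m' = d2_term m s i) * h m') =
        (if m' = d2_term m s i then ?c s * h (d2_term m s i) else 0)" for m'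
      by simp
    ultimately show "(\<Sum>m'\<in>T. ?c s * (of_bool (m' = d2_term m s i) * h m')) =
        ?c s * h (d2_term m s i)"
      using finT by (simp add: sum.delta)
  qed
  finally show ?thesis by (simp add: sum_distrib_left)
qed

text \<open>The coefficient of \<open>m''\<close> in the part of \<open>d\<^sub>2 (d\<^sub>2 m)\<close> that differentiates \<open>\<xi>\<^sub>s\<close> first and
  \<open>\<xi>\<^sub>s\<^sub>'\<close> second, for \<open>p = (s, s')\<close>.\<close>

definition d2_d2_coef :: "mon \<Rightarrow> mon \<Rightarrow> nat \<times> nat \<Rightarrow> rat" where
  "d2_d2_coef m m'' p = koszul_sign (snd m) (fst p) * koszul_sign (snd m - {fst p}) (snd p) *
     (\<Sum>i\<le>fst p. \<Sum>j\<le>snd p. of_bool (m'' = d2_term (d2_term m (fst p) i) (snd p) j))"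

lemma d2_dcoef_eq_sum:
  assumes fin: "finite (snd m)"
  shows "d2 (dcoef m) m'' = sum (d2_d2_coef m m'') (SIGMA s:snd m. snd m - {s})"
proof -
  define S where "S = snd m"
  define T where "T = (\<lambda>(s, i). d2_term m s i) ` (SIGMA s:S. {..s})"
  have finS: "finite S" using fin by (simp add: S_def)
  have "dcoef m m' = 0" if "m' \<notin> T" for m'
    using that by (intro dcoef_eq_0) (auto simp: T_def S_def)
  then have "dcoef m \<in> supported_on T" unfolding supported_on_def by blast
  then have "d2 (dcoef m) m'' = (\<Sum>m'\<in>T. dcoef m m' * dcoef m' m'')"
    using d2_eq_d2_on[of T] finS by (simp add: T_def d2_on_def)
  also have "\<dots> = (\<Sum>s\<in>S. koszul_sign S s * (\<Sum>i\<le>s. dcoef (d2_term m s i) m''))"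
    using sum_dcoef_mult[OF fin] by (simp add: T_def S_def)
  also have "\<dots> = (\<Sum>s\<in>S. \<Sum>s'\<in>S - {s}. d2_d2_coef m m'' (s, s'))"
  proof (rule sum.cong[OF refl])
    fix s
    have snd_term: "snd (d2_term m s i) = S - {s}" for i by (simp add: d2_term_def S_def)
    then have "koszul_sign S s * (\<Sum>i\<le>s. dcoef (d2_term m s i) m'') =
        (\<Sum>i\<le>s. \<Sum>s'\<in>S - {s}. koszul_sign S s * koszul_sign (S - {s}) s' *
          (\<Sum>j\<le>s'. of_bool (m'' = d2_term (d2_term m s i) s' j)))"
      by (simp only: dcoef_eq_sum snd_term sum_distrib_left mult.assoc)
    also have "\<dots> = (\<Sum>s'\<in>S - {s}. d2_d2_coef m m'' (s, s'))"
      unfolding d2_d2_coef_def S_def fst_conv snd_conv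
      by (subst sum.swap) (simp only: sum_distrib_left)
    finally show "koszul_sign S s * (\<Sum>i\<le>s. dcoef (d2_term m s i) m'') =
        (\<Sum>s'\<in>S - {s}. d2_d2_coef m m'' (s, s'))" .
  qed
  also have "\<dots> = sum (d2_d2_coef m m'') (SIGMA s:S. S - {s})"
    using finS sum.Sigma[of S "\<lambda>s. S - {s}" "\<lambda>s s'. d2_d2_coef m m'' (s, s')"]
    by (simp add: split_def)
  finally show ?thesis by (simp add: S_def)
qed

lemma d2_d2_coef_swap:
  assumes "finite (snd m)" "s \<in> snd m" "s' \<in> snd m" "s \<noteq> s'"
  shows "d2_d2_coef m m'' (s', s) = - d2_d2_coef m m'' (s, s')"
proof -
  have terms: "(\<Sum>i\<le>s'. \<Sum>j\<le>s. of_bool (m'' = d2_term (d2_term m s' i) s j)) =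
      (\<Sum>i\<le>s. \<Sum>j\<le>s'. of_bool (m'' = d2_term (d2_term m s i) s' j))"
    by (subst sum.swap) (simp only: d2_term_commute[of m s' _ s])
  have sign: "koszul_sign (snd m) s' * koszul_sign (snd m - {s'}) s =
      - (koszul_sign (snd m) s * koszul_sign (snd m - {s}) s')"
    using koszul_sign_swap[OF assms(1,3,2) assms(4)[symmetric]] .
  show ?thesis unfolding d2_d2_coef_def fst_conv snd_conv terms sign by (rule mult_minus_left)
qed

text \<open>\<open>d\<^sub>2 \<circ> d\<^sub>2 = 0\<close> on monomials: the Koszul signs make the terms for \<open>(s, s')\<close> and \<open>(s', s)\<close>
  cancel.\<close>

lemma d2_dcoef_eq_0:
  assumes "finite (snd m)"
  shows "d2 (dcoef m) = (\<lambda>_. 0)"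
proof
  fix m''
  have "sum (d2_d2_coef m m'') (SIGMA s:snd m. snd m - {s}) = 0"
  proof (rule sum_swap_antisym_eq_0)
    fix p assume "p \<in> (SIGMA s:snd m. snd m - {s})"
    then obtain s s' where p: "p = (s, s')" "s \<in> snd m" "s' \<in> snd m" "s \<noteq> s'" by auto
    show "d2_d2_coef m m'' (prod.swap p) = - d2_d2_coef m m'' p"
      unfolding p(1) swap_simp by (rule d2_d2_coef_swap[OF assms p(2-4)])
  qed (use assms in auto)
  then show "d2 (dcoef m) m'' = 0" using d2_dcoef_eq_sum[OF assms] by simp
qed

definition expv :: "nat \<Rightarrow> nat \<Rightarrow> nat \<Rightarrow> nat \<Rightarrow> nat" where
  "expv a b c = (\<lambda>k. if k = 0 then a else if k = 1 then b else if k = 2 then c else 0)"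

lemma expv_apply [simp]: "expv a b c 0 = a" "expv a b c (Suc 0) = b" "expv a b c 2 = c"
  by (simp_all add: expv_def)

lemma expv_eq_iff [simp]: "expv a b c = expv a' b' c' \<longleftrightarrow> a = a' \<and> b = b' \<and> c = c'"
  by (metis expv_apply)

definition Mons3 :: "mon set" where
  "Mons3 = {m. (\<forall>k\<ge>3. fst m k = 0) \<and> snd m \<subseteq> {..<3}}"

lemma expv_mem_Mons3 [simp]: "(expv a b c, S) \<in> Mons3 \<longleftrightarrow> S \<subseteq> {..<3}"
  by (auto simp: Mons3_def expv_def)

lemma Mons3_eq_expv:
  assumes "m \<in> Mons3"
  shows "m = (expv (fst m 0) (fst m 1) (fst m 2), snd m)"
proof -
  have "fst m k = expv (fst m 0) (fst m 1) (fst m 2) k" for k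
  proof (cases "k < 3")
    case True
    then have "k = 0 \<or> k = 1 \<or> k = 2" by auto
    then show ?thesis by (auto simp: expv_def)
  next
    case False
    then show ?thesis using assms by (simp add: Mons3_def expv_def)
  qed
  then have "fst m = expv (fst m 0) (fst m 1) (fst m 2)" by (rule ext)
  then show ?thesis by (metis prod.collapse)
qed

lemma Mons3_cases:
  assumes "m \<in> Mons3"
  obtains a b c S where "m = (expv a b c, S)" "S \<subseteq> {..<3}"
  using Mons3_eq_expv[OF assms] assms by (auto simp: Mons3_def)

lemma subset_lessThan_3_cases:
  assumes "S \<subseteq> {..<(3::nat)}"
  shows "S = {} \<or> S = {0} \<or> S = {1} \<or> S = {2} \<or> S = {0,1} \<or> S = {0,2} \<or> S = {1,2} \<or> S = {0,1,2}"
proof -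
  have "S \<in> Pow {0, 1, 2}" using assms by auto
  then show ?thesis by (simp add: Pow_insert insert_commute)
qed

lemma mons_3_eq: "mons 3 q t = {m\<in>Mons3. qdeg m = q \<and> tdeg m = t}"
  by (auto simp: mons_def Mons3_def)

lemma qdeg_expv: "qdeg (expv a b c, S) = 2*a + 4*b + 6*c + (\<Sum>k\<in>S. 2*k + 4)"
proof -
  have "(\<Sum>k\<in>{k. expv a b c k \<noteq> 0}. expv a b c k * (2*k + 2)) =
      (\<Sum>k\<in>{0,1,2}. expv a b c k * (2*k + 2))"
    by (rule sum.mono_neutral_left) (auto simp: expv_def split: if_splits)
  then show ?thesis by (simp add: qdeg_def)
qed

lemma tdeg_expv: "tdeg (expv a b c, S) = 2*b + 4*c + (\<Sum>k\<in>S. 2*k + 1)"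
proof -
  have "(\<Sum>k\<in>{k. expv a b c k \<noteq> 0}. expv a b c k * (2*k)) = (\<Sum>k\<in>{0,1,2}. expv a b c k * (2*k))"
    by (rule sum.mono_neutral_left) (auto simp: expv_def split: if_splits)
  then show ?thesis by (simp add: tdeg_def)
qed

lemma finite_mons_3: "finite (mons 3 q t)"
proof (rule finite_subset)
  show "mons 3 q t \<subseteq> (\<lambda>(a, b, c, S). (expv a b c, S)) ` ({..q} \<times> {..q} \<times> {..q} \<times> Pow {..<3})"
  proof
    fix m assume "m \<in> mons 3 q t"
    then have m: "m \<in> Mons3" "qdeg m = q" by (auto simp: mons_3_eq)
    obtain a b c S where "m = (expv a b c, S)" "S \<subseteq> {..<3}" using m(1) by (rule Mons3_cases)
    moreover have "a \<le> q" "b \<le> q" "c \<le> q" using m(2) calculation(1) by (auto simp: qdeg_expv)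
    ultimately show "m \<in> (\<lambda>(a, b, c, S). (expv a b c, S)) ` ({..q} \<times> {..q} \<times> {..q} \<times> Pow {..<3})"
      by force
  qed
qed simp

lemma d2_term_expv:
  "d2_term (expv a b c, S) 0 0 = (expv (a+2) b c, S - {0})"
  "d2_term (expv a b c, S) (Suc 0) 0 = (expv (a+1) (b+1) c, S - {1})"
  "d2_term (expv a b c, S) (Suc 0) (Suc 0) = (expv (a+1) (b+1) c, S - {1})"
  "d2_term (expv a b c, S) 2 0 = (expv (a+1) b (c+1), S - {2})"
  "d2_term (expv a b c, S) 2 (Suc 0) = (expv a (b+2) c, S - {2})"
  "d2_term (expv a b c, S) 2 2 = (expv (a+1) b (c+1), S - {2})"
  by (auto simp: d2_term_def expv_def unitv_def fun_eq_iff)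

lemma atMost_le_2: "{..0::nat} = {0}" "{..Suc 0} = {0, Suc 0}" "{..2::nat} = {0, Suc 0, 2}"
  by auto

lemma d2_term_Mons3:
  assumes "m \<in> Mons3" "s \<in> snd m" "i \<le> s"
  shows "d2_term m s i \<in> Mons3 \<and> qdeg (d2_term m s i) = qdeg m \<and>
    Suc (tdeg (d2_term m s i)) = tdeg m"
proof -
  obtain a b c S where m: "m = (expv a b c, S)" and S: "S \<subseteq> {..<3}"
    using assms(1) by (rule Mons3_cases)
  have "finite S" using S finite_subset by blast
  then have "(\<Sum>k\<in>S. 2*k + 4) = 2*s + 4 + (\<Sum>k\<in>S - {s}. 2*k + 4)"
    "(\<Sum>k\<in>S. 2*k + 1) = 2*s + 1 + (\<Sum>k\<in>S - {s}. 2*k + 1)"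
    using assms(2) m by (simp_all add: sum.remove)
  moreover have "S - {s} \<subseteq> {..<3}" using S by blast
  moreover have "(s, i) \<in> {(0, 0), (1, 0), (1, 1), (2, 0), (2, 1), (2, 2)}"
    using assms(2,3) S m by (auto simp: le_Suc_eq numeral_2_eq_2)
  ultimately show ?thesis
    unfolding m by (auto simp: d2_term_expv qdeg_expv tdeg_expv)
qed

lemma dcoef_Mons3:
  assumes "m \<in> Mons3" "dcoef m m' \<noteq> 0"
  shows "m' \<in> Mons3 \<and> qdeg m' = qdeg m \<and> Suc (tdeg m') = tdeg m"
  using assms d2_term_Mons3 dcoef_eq_0 by metis

section \<open>A matching on the monomials of \<open>A\<^sub>3\<close>\<close>

text \<open>\<open>pivot_order\<close> is a lexicographic order chosen so that \<open>pivot m\<close> is the leading monomial of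
  \<open>d\<^sub>2 m\<close> for every source \<open>m\<close>, and \<open>p\<close> the leading monomial of \<open>crit_cycle p\<close> for every critical
  \<open>p\<close>; \<open>odd_rank\<close> ranks the odd parts of equal cardinality.\<close>

definition odd_rank :: "nat set \<Rightarrow> nat" where
  "odd_rank S = (if 2 \<in> S then of_bool (0 \<in> S \<and> card S = 2) else if 1 \<in> S then 2 else 1)"

definition pivot_order :: "mon \<Rightarrow> nat \<times> nat \<times> nat \<times> nat \<times> nat \<times> nat" where
  "pivot_order m = (card (snd m), of_bool (card (snd m) = 1 \<and> 1 \<le> fst m 1), odd_rank (snd m),
     fst m 1, fst m 0, fst m 2)"

lemma pivot_order_inj: "inj_on pivot_order Mons3"
proof (rule inj_onI)
  fix m m' assume m: "m \<in> Mons3" "m' \<in> Mons3" "pivot_order m = pivot_order m'"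
  have "snd m = snd m'"
    using subset_lessThan_3_cases[of "snd m"] subset_lessThan_3_cases[of "snd m'"] m
    by (auto simp: Mons3_def pivot_order_def odd_rank_def)
  then show "m = m'" using m Mons3_eq_expv[OF m(1)] Mons3_eq_expv[OF m(2)]
    by (simp add: pivot_order_def)
qed

definition is_src :: "mon \<Rightarrow> bool" where
  "is_src m \<longleftrightarrow> 2 \<in> snd m \<or> ((snd m = {0} \<or> snd m = {1}) \<and> fst m 1 = 0)
     \<or> (snd m = {0, 1} \<and> fst m 1 \<le> 1)"

definition pivot :: "mon \<Rightarrow> mon" where
  "pivot m = (if 2 \<in> snd m then d2_term m 2 1
     else if snd m = {1} \<or> (snd m = {0, 1} \<and> fst m 1 \<noteq> 1) then d2_term m 1 0
     else d2_term m 0 0)"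

definition is_crit :: "mon \<Rightarrow> bool" where
  "is_crit m \<longleftrightarrow> (snd m = {} \<and> fst m 1 = 0 \<and> fst m 0 \<le> 1) \<or> (snd m = {} \<and> fst m 0 = 0 \<and> fst m 1 = 1)
     \<or> (snd m = {0} \<and> fst m 0 = 0 \<and> fst m 1 = 1) \<or> (snd m = {1} \<and> fst m 0 \<le> 1 \<and> fst m 1 = 1)"

definition unpivot :: "mon \<Rightarrow> mon" where
  "unpivot m = (let a = fst m 0; b = fst m 1; c = fst m 2 in
     if 2 \<le> b then (expv a (b - 2) c, insert 2 (snd m))
     else if snd m = {} then (if b = 1 then (expv (a - 1) 0 c, {1}) else (expv (a - 2) 0 c, {0}))
     else if snd m = {0} then (expv (a - 1) 0 c, {0, 1})
     else (expv (a - 2) 1 c, {0, 1}))"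

lemmas matching_simps = is_src_def pivot_def is_crit_def unpivot_def pivot_order_def odd_rank_def
  d2_term_expv atMost_le_2 Let_def insert_Diff_if insert_commute

lemma pivot_is_d2_term:
  assumes "is_src m"
  obtains s i where "s \<in> snd m" "i \<le> s" "pivot m = d2_term m s i"
proof -
  have "(2 \<in> snd m \<and> pivot m = d2_term m 2 1) \<or> (1 \<in> snd m \<and> pivot m = d2_term m 1 0)
      \<or> (0 \<in> snd m \<and> pivot m = d2_term m 0 0)"
    using assms by (auto simp: is_src_def pivot_def)
  then show ?thesis using that[of 2 1] that[of 1 0] that[of 0 0] by auto
qed

lemma d2_term_le_pivot:
  assumes "m \<in> Mons3" "is_src m" "s \<in> snd m" "i \<le> s"
  shows "d2_term m s i = pivot m \<or> pivot_order (d2_term m s i) < pivot_order (pivot m)"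
proof -
  obtain a b c S where m: "m = (expv a b c, S)" and S: "S \<subseteq> {..<3}"
    using assms(1) by (rule Mons3_cases)
  have "\<forall>s\<in>S. \<forall>i\<in>{..s}.
      d2_term m s i = pivot m \<or> pivot_order (d2_term m s i) < pivot_order (pivot m)"
    using subset_lessThan_3_cases[OF S] assms(2) unfolding m
    by (elim disjE) (simp_all add: matching_simps)
  then show ?thesis using assms(3,4) m by auto
qed

lemma pivot_matched:
  assumes "m \<in> Mons3" "is_src m"
  shows "\<not> is_src (pivot m) \<and> \<not> is_crit (pivot m) \<and> unpivot (pivot m) = m"
proof -
  obtain a b c S where m: "m = (expv a b c, S)" and S: "S \<subseteq> {..<3}"
    using assms(1) by (rule Mons3_cases)
  show ?thesis
    using subset_lessThan_3_cases[OF S] assms(2) unfolding m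
    by (elim disjE) (simp_all add: matching_simps)
qed

lemma src_not_crit:
  assumes "m \<in> Mons3" "is_src m"
  shows "\<not> is_crit m"
proof -
  obtain a b c S where m: "m = (expv a b c, S)" and S: "S \<subseteq> {..<3}"
    using assms(1) by (rule Mons3_cases)
  show ?thesis
    using subset_lessThan_3_cases[OF S] assms(2) unfolding m
    by (elim disjE) (simp_all add: matching_simps)
qed

lemma unpivot_matched:
  assumes "m \<in> Mons3" "\<not> is_src m" "\<not> is_crit m"
  shows "unpivot m \<in> Mons3 \<and> is_src (unpivot m) \<and> pivot (unpivot m) = m"
proof -
  obtain a b c S where m: "m = (expv a b c, S)" and S: "S \<subseteq> {..<3}"
    using assms(1) by (rule Mons3_cases)
  show ?thesis
    using subset_lessThan_3_cases[OF S] assms(2,3) unfolding m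
    by (elim disjE) (auto simp: matching_simps)
qed

definition fin_supp :: "(mon \<Rightarrow> rat) \<Rightarrow> bool" where
  "fin_supp f \<longleftrightarrow> finite {m. f m \<noteq> 0}"

lemma fin_supp_unit_vec: "fin_supp (unit_vec m)"
  by (simp add: fin_supp_def unit_vec_def)

lemma fin_supp_qscale: "fin_supp f \<Longrightarrow> fin_supp (qscale c f)"
  unfolding fin_supp_def by (rule finite_subset[rotated]) auto

lemma fin_supp_add: "fin_supp f \<Longrightarrow> fin_supp g \<Longrightarrow> fin_supp (f + g)"
  unfolding fin_supp_def by (rule finite_subset[of _ "{m. f m \<noteq> 0} \<union> {m. g m \<noteq> 0}"]) auto

lemma fin_supp_diff: "fin_supp f \<Longrightarrow> fin_supp g \<Longrightarrow> fin_supp (f - g)"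
  unfolding fin_supp_def by (rule finite_subset[of _ "{m. f m \<noteq> 0} \<union> {m. g m \<noteq> 0}"]) auto

lemma d2_qscale: "d2 (qscale c f) = qscale c (d2 f)"
proof (cases "c = 0")
  case False
  then show ?thesis by (simp add: d2_def qscale_def fun_eq_iff sum_distrib_left mult.assoc)
qed (simp add: d2_def qscale_def)

lemma d2_add: "fin_supp f \<Longrightarrow> fin_supp g \<Longrightarrow> d2 (f + g) = d2 f + d2 g"
proof -
  assume fg: "fin_supp f" "fin_supp g"
  define F where "F = {m. f m \<noteq> 0} \<union> {m. g m \<noteq> 0}"
  interpret d: Vector_Spaces.linear qscale qscale "d2_on F" by (rule linear_d2_on)
  have "finite F" using fg by (simp add: F_def fin_supp_def)
  moreover have "f \<in> supported_on F" "g \<in> supported_on F" "f + g \<in> supported_on F"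
    by (auto simp: supported_on_def F_def)
  ultimately show ?thesis by (simp add: d2_eq_d2_on d.add)
qed

lemma d2_diff: "fin_supp f \<Longrightarrow> fin_supp g \<Longrightarrow> d2 (f - g) = d2 f - d2 g"
proof -
  assume fg: "fin_supp f" "fin_supp g"
  have "d2 (- g) = - d2 g" by (simp add: d2_def fun_eq_iff sum_negf)
  moreover have "fin_supp (- g)" using fg(2) by (simp add: fin_supp_def)
  ultimately show ?thesis using d2_add[OF fg(1), of "- g"] by simp
qed

lemma koszul_sign_singleton: "koszul_sign {s} s = 1"
proof -
  have "{j\<in>{s}. j < s} = {}" by auto
  then show ?thesis unfolding koszul_sign_def by (simp only: card.empty power_0)
qed

lemma dcoef_empty: "dcoef (e, {}) = (\<lambda>_. 0)"
  by (simp add: dcoef_def fun_eq_iff)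

lemma dcoef_xi0: "dcoef (expv a b c, {0}) = unit_vec (expv (a + 2) b c, {})"
  by (simp add: fun_eq_iff dcoef_eq_sum koszul_sign_singleton d2_term_expv unit_vec_def of_bool_def)

text \<open>Stated with \<open>{Suc 0}\<close>: inside these terms the simplifier rewrites \<open>{1}\<close> to that form.\<close>

lemma dcoef_xi1: "dcoef (expv a b c, {Suc 0}) = qscale 2 (unit_vec (expv (a + 1) (b + 1) c, {}))"
  by (simp add: fun_eq_iff dcoef_eq_sum koszul_sign_singleton d2_term_expv atMost_le_2
      unit_vec_def of_bool_def)

lemma dcoef_xi2:
  "dcoef (expv a b c, {2}) =
    qscale 2 (unit_vec (expv (a + 1) b (c + 1), {})) + unit_vec (expv a (b + 2) c, {})"
  by (simp add: fun_eq_iff dcoef_eq_sum koszul_sign_singleton d2_term_expv atMost_le_2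
      unit_vec_def of_bool_def)

text \<open>For \<open>p = x\<^sub>2\<^sup>c x\<^sub>1\<xi>\<^sub>0\<close> and \<open>p = x\<^sub>2\<^sup>c x\<^sub>0\<^sup>a x\<^sub>1\<xi>\<^sub>1\<close> these are the cycles \<open>x\<^sub>2\<^sup>c (2 x\<^sub>1\<xi>\<^sub>0 - x\<^sub>0\<xi>\<^sub>1)\<close> and
  \<open>x\<^sub>2\<^sup>c x\<^sub>0\<^sup>a (x\<^sub>1\<xi>\<^sub>1 - 2 x\<^sub>0\<xi>\<^sub>2 + 4 x\<^sub>2\<xi>\<^sub>0)\<close>; the other critical monomials are cycles themselves.\<close>

definition crit_cycle :: "mon \<Rightarrow> mon \<Rightarrow> rat" where
  "crit_cycle p = (let a = fst p 0; c = fst p 2 in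
     if snd p = {0} then qscale 2 (unit_vec p) - unit_vec (expv 1 0 c, {1})
     else if snd p = {1} then unit_vec p - qscale 2 (unit_vec (expv (a + 1) 0 c, {2}))
       + qscale 4 (unit_vec (expv a 0 (c + 1), {0}))
     else unit_vec p)"

lemmas d2_simps = d2_add d2_diff d2_qscale d2_unit_vec fin_supp_unit_vec fin_supp_qscale
  fin_supp_add fin_supp_diff

lemma d2_cycle_xi0:
  "d2 (qscale 2 (unit_vec (expv 0 1 c, {0})) - unit_vec (expv 1 0 c, {1})) = (\<lambda>_. 0)"
  by (simp add: d2_simps dcoef_xi0 dcoef_xi1) (simp add: fun_eq_iff unit_vec_def)

lemma d2_cycle_xi1:
  "d2 (unit_vec (expv a 1 c, {1}) - qscale 2 (unit_vec (expv (a + 1) 0 c, {2}))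
     + qscale 4 (unit_vec (expv a 0 (c + 1), {0}))) = (\<lambda>_. 0)"
  by (simp add: d2_simps dcoef_xi0 dcoef_xi1 dcoef_xi2) (simp add: fun_eq_iff unit_vec_def)

lemma d2_crit_cycle:
  assumes "p \<in> Mons3" "is_crit p"
  shows "d2 (crit_cycle p) = (\<lambda>_. 0)"
proof -
  obtain a b c S where p: "p = (expv a b c, S)" and S: "S \<subseteq> {..<3}"
    using assms(1) by (rule Mons3_cases)
  show ?thesis
    using subset_lessThan_3_cases[OF S] assms(2) d2_cycle_xi0[of c] d2_cycle_xi1[of a c] unfolding p
    by (elim disjE) (auto simp: is_crit_def crit_cycle_def d2_unit_vec dcoef_empty)
qed

lemma crit_cycle_pivot: "crit_cycle p p \<noteq> 0"
  by (simp add: crit_cycle_def unit_vec_def Let_def)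

lemma crit_cycle_nonzero_cases:
  assumes "crit_cycle p m \<noteq> 0" "m \<noteq> p"
  shows "(snd p = {0} \<and> m = (expv 1 0 (fst p 2), {1})) \<or> (snd p = {1} \<and>
    (m = (expv (fst p 0 + 1) 0 (fst p 2), {2}) \<or> m = (expv (fst p 0) 0 (fst p 2 + 1), {0})))"
  using assms by (auto simp: crit_cycle_def unit_vec_def Let_def split: if_splits)

lemma crit_cycle_support:
  assumes "p \<in> Mons3" "is_crit p" "crit_cycle p m \<noteq> 0" "m \<noteq> p"
  shows "pivot_order m < pivot_order p \<and> m \<in> Mons3 \<and> qdeg m = qdeg p \<and> tdeg m = tdeg p"
proof -
  obtain a b c S where p: "p = (expv a b c, S)" and S: "S \<subseteq> {..<3}"
    using assms(1) by (rule Mons3_cases)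
  have "(S = {0} \<and> a = 0 \<and> b = 1) \<or> (S = {1} \<and> a \<le> 1 \<and> b = 1)"
    using crit_cycle_nonzero_cases[OF assms(3,4)] assms(2) by (auto simp: p is_crit_def)
  then consider "S = {0}" "a = 0" "b = 1" "m = (expv 1 0 c, {1})"
    | "S = {1}" "a \<le> 1" "b = 1" "m = (expv (a + 1) 0 c, {2})"
    | "S = {1}" "a \<le> 1" "b = 1" "m = (expv a 0 (c + 1), {0})"
    using crit_cycle_nonzero_cases[OF assms(3,4)] by (auto simp: p)
  then show ?thesis
    by cases (simp_all add: p pivot_order_def odd_rank_def qdeg_expv tdeg_expv)
qed

section \<open>Dimensions of cycles and boundaries\<close>

definition Src :: "nat \<Rightarrow> nat \<Rightarrow> mon set" where
  "Src q t = {m\<in>mons 3 q t. is_src m}"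

definition Crit :: "nat \<Rightarrow> nat \<Rightarrow> mon set" where
  "Crit q t = {m\<in>mons 3 q t. is_crit m}"

lemma finite_Src: "finite (Src q t)"
  using finite_mons_3 by (simp add: Src_def)

lemma finite_Crit: "finite (Crit q t)"
  using finite_mons_3 by (simp add: Crit_def)

lemma pivot_Mons3:
  assumes "m \<in> Mons3" "is_src m"
  shows "pivot m \<in> Mons3 \<and> qdeg (pivot m) = qdeg m \<and> Suc (tdeg (pivot m)) = tdeg m"
proof -
  obtain s i where "s \<in> snd m" "i \<le> s" "pivot m = d2_term m s i"
    using assms(2) by (rule pivot_is_d2_term)
  then show ?thesis using d2_term_Mons3[OF assms(1)] by simp
qed

lemma pivot_mem_mons_3:
  assumes "m \<in> Src q (Suc t)"
  shows "pivot m \<in> mons 3 q t"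
proof -
  have "m \<in> Mons3" "is_src m" "qdeg m = q" "tdeg m = Suc t"
    using assms by (auto simp: Src_def mons_3_eq)
  then show ?thesis using pivot_Mons3[of m] by (simp add: mons_3_eq)
qed

lemma dcoef_pivot_neq_0:
  assumes "m \<in> Mons3" "is_src m"
  shows "dcoef m (pivot m) \<noteq> 0"
proof -
  obtain s i where "s \<in> snd m" "i \<le> s" "pivot m = d2_term m s i"
    using assms(2) by (rule pivot_is_d2_term)
  moreover have "finite (snd m)" using assms(1) finite_subset by (auto simp: Mons3_def)
  ultimately show ?thesis using dcoef_d2_term_neq_0 by simp
qed

lemma dcoef_above_pivot:
  assumes "m \<in> Mons3" "is_src m" "pivot_order (pivot m) < pivot_order m'"
  shows "dcoef m m' = 0"
proof (rule dcoef_eq_0)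
  fix s i assume "s \<in> snd m" "i \<le> s"
  then show "m' \<noteq> d2_term m s i" using d2_term_le_pivot[OF assms(1,2)] assms(3) by fastforce
qed

lemma inj_on_pivot_Src: "inj_on pivot (Src q t)"
  by (rule inj_on_inverseI[where g = unpivot]) (auto simp: Src_def mons_3_eq pivot_matched)

lemma d2_Apiece_3:
  assumes "f \<in> Apiece 3 q (Suc t)"
  shows "d2 f \<in> Apiece 3 q t"
  unfolding Apiece_eq_supported_on supported_on_def
proof (intro CollectI allI impI)
  fix m' assume "d2 f m' \<noteq> 0"
  then obtain m where "f m \<noteq> 0" "dcoef m m' \<noteq> 0"
    unfolding d2_def by (metis (mono_tags, lifting) mult_eq_0_iff sum.neutral)
  moreover have "m \<in> mons 3 q (Suc t)"
    using assms \<open>f m \<noteq> 0\<close> unfolding Apiece_def mem_Collect_eq by blast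
  ultimately show "m' \<in> mons 3 q t" using dcoef_Mons3[of m m'] by (simp add: mons_3_eq)
qed

lemma unit_vec_mem_Apiece: "m \<in> mons n q t \<Longrightarrow> unit_vec m \<in> Apiece n q t"
  by (simp add: Apiece_def unit_vec_def)

lemma Src_0: "Src q 0 = {}"
proof (rule ccontr)
  assume "Src q 0 \<noteq> {}"
  then obtain m where m: "m \<in> Mons3" "is_src m" "tdeg m = 0" by (auto simp: Src_def mons_3_eq)
  obtain a b c S where abc: "m = (expv a b c, S)" "S \<subseteq> {..<3}" using m(1) by (rule Mons3_cases)
  then have "S = {}" using m(3) finite_subset[OF abc(2)] by (auto simp: tdeg_expv)
  then show False using m(2) abc(1) by (simp add: is_src_def)
qed

lemma card_Src_le_dim_boundaries: "card (Src q t) \<le> V.dim (d2 ` Apiece 3 q t)"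
proof (cases t)
  case 0
  then show ?thesis by (simp add: Src_0)
next
  case (Suc t')
  have src: "m \<in> Mons3" "is_src m" if "m \<in> Src q t" for m
    using that by (simp_all add: Src_def mons_3_eq)
  have "pivot ` Src q t \<subseteq> Mons3" using pivot_mem_mons_3 Suc by (auto simp: mons_3_eq)
  then have "inj_on (pivot_order \<circ> pivot) (Src q t)"
    by (rule comp_inj_on[OF inj_on_pivot_Src inj_on_subset[OF pivot_order_inj]])
  moreover have "dcoef ` Src q t \<subseteq> d2 ` Apiece 3 q t"
  proof
    fix y assume "y \<in> dcoef ` Src q t"
    then obtain m where m: "m \<in> Src q t" "y = dcoef m" by blast
    then have "unit_vec m \<in> Apiece 3 q t" by (simp add: Src_def unit_vec_mem_Apiece)
    then show "y \<in> d2 ` Apiece 3 q t" using m(2) d2_unit_vec[of m] by (metis image_eqI)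
  qed
  moreover have "d2 ` Apiece 3 q t \<subseteq> supported_on (mons 3 q t')"
    using d2_Apiece_3 Suc by (auto simp: Apiece_eq_supported_on)
  ultimately show ?thesis
    using card_le_dim_if_triangular[OF finite_Src, where key = pivot_order and p = pivot
        and x = dcoef, OF _ dcoef_pivot_neq_0 dcoef_above_pivot _ _ finite_mons_3] src
    by (simp add: comp_def)
qed

definition cycles :: "nat \<Rightarrow> nat \<Rightarrow> (mon \<Rightarrow> rat) set" where
  "cycles q t = {f\<in>Apiece 3 q t. d2 f = (\<lambda>_. 0)}"

definition leading_cycle :: "mon \<Rightarrow> mon \<Rightarrow> rat" where
  "leading_cycle p = (if is_crit p then crit_cycle p else dcoef (unpivot p))"

lemma pivot_Src:
  assumes "m \<in> Src q (Suc t)"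
  shows "pivot m \<in> mons 3 q t \<and> \<not> is_src (pivot m) \<and> \<not> is_crit (pivot m) \<and> unpivot (pivot m) = m"
  using assms pivot_mem_mons_3 pivot_matched by (auto simp: Src_def mons_3_eq)

lemma dcoef_mem_cycles:
  assumes "m \<in> Src q (Suc t)"
  shows "dcoef m \<in> cycles q t"
proof -
  have m: "m \<in> Mons3" "qdeg m = q" "tdeg m = Suc t" using assms by (auto simp: Src_def mons_3_eq)
  then have "finite (snd m)" using finite_subset by (auto simp: Mons3_def)
  moreover have "dcoef m \<in> Apiece 3 q t"
    using dcoef_Mons3[OF m(1)] m(2,3) by (auto simp: Apiece_def mons_3_eq)
  ultimately show ?thesis by (simp add: cycles_def d2_dcoef_eq_0)
qed

lemma crit_cycle_mem_cycles:
  assumes "p \<in> Crit q t"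
  shows "crit_cycle p \<in> cycles q t"
proof -
  have p: "p \<in> Mons3" "is_crit p" "qdeg p = q" "tdeg p = t"
    using assms by (auto simp: Crit_def mons_3_eq)
  then have "crit_cycle p \<in> Apiece 3 q t"
    using crit_cycle_support[OF p(1,2)] by (fastforce simp: Apiece_def mons_3_eq)
  then show ?thesis using d2_crit_cycle[OF p(1,2)] by (simp add: cycles_def)
qed

lemma leading_cycle_pivot_Src:
  assumes "m \<in> Src q (Suc t)"
  shows "leading_cycle (pivot m) = dcoef m"
  using pivot_Src[OF assms] by (simp add: leading_cycle_def)

lemma leading_cycle_pivot:
  assumes "p \<in> pivot ` Src q (Suc t) \<union> Crit q t"
  shows "leading_cycle p p \<noteq> 0"
  using assms
proof (elim UnE imageE)
  fix m assume "m \<in> Src q (Suc t)" "p = pivot m"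
  then show ?thesis
    using leading_cycle_pivot_Src dcoef_pivot_neq_0 by (simp add: Src_def mons_3_eq)
next
  assume "p \<in> Crit q t"
  then show ?thesis using crit_cycle_pivot by (simp add: Crit_def leading_cycle_def)
qed

lemma leading_cycle_above_pivot:
  assumes "p \<in> pivot ` Src q (Suc t) \<union> Crit q t" "pivot_order p < pivot_order m'"
  shows "leading_cycle p m' = 0"
  using assms(1)
proof (elim UnE imageE)
  fix m assume "m \<in> Src q (Suc t)" "p = pivot m"
  then show ?thesis
    using leading_cycle_pivot_Src dcoef_above_pivot assms(2) by (simp add: Src_def mons_3_eq)
next
  assume "p \<in> Crit q t"
  then have "p \<in> Mons3" "is_crit p" by (simp_all add: Crit_def mons_3_eq)
  moreover have "m' \<noteq> p" using assms(2) by auto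
  ultimately have "crit_cycle p m' = 0" using crit_cycle_support[of p m'] assms(2) by (metis less_asym)
  then show ?thesis using \<open>is_crit p\<close> by (simp add: leading_cycle_def)
qed

lemma leading_cycle_mem_cycles:
  assumes "p \<in> pivot ` Src q (Suc t) \<union> Crit q t"
  shows "leading_cycle p \<in> cycles q t"
  using assms
proof (elim UnE imageE)
  fix m assume "m \<in> Src q (Suc t)" "p = pivot m"
  then show ?thesis using leading_cycle_pivot_Src dcoef_mem_cycles by simp
next
  assume "p \<in> Crit q t"
  then show ?thesis using crit_cycle_mem_cycles by (simp add: Crit_def leading_cycle_def)
qed

lemma card_le_dim_cycles: "card (Src q (Suc t)) + card (Crit q t) \<le> V.dim (cycles q t)"
proof -
  let ?I = "pivot ` Src q (Suc t) \<union> Crit q t"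
  have "?I \<subseteq> Mons3"
    using pivot_Src by (auto simp: Crit_def mons_3_eq)
  have "card ?I \<le> V.dim (cycles q t)"
  proof (rule card_le_dim_if_triangular[where key = pivot_order and p = id and x = leading_cycle])
    show "finite ?I" using finite_Src finite_Crit by simp
    show "inj_on (\<lambda>p. pivot_order (id p)) ?I"
      using inj_on_subset[OF pivot_order_inj \<open>?I \<subseteq> Mons3\<close>] by simp
    show "leading_cycle p (id p) \<noteq> 0" if "p \<in> ?I" for p
      using leading_cycle_pivot[OF that] by simp
    show "leading_cycle p m' = 0" if "p \<in> ?I" "pivot_order (id p) < pivot_order m'" for p m'
      using leading_cycle_above_pivot that by simp
    show "leading_cycle ` ?I \<subseteq> cycles q t" using leading_cycle_mem_cycles by blast
    show "cycles q t \<subseteq> supported_on (mons 3 q t)"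
      by (auto simp: cycles_def Apiece_eq_supported_on)
  qed (rule finite_mons_3)
  moreover have "pivot ` Src q (Suc t) \<inter> Crit q t = {}"
    using pivot_Src by (fastforce simp: Crit_def)
  then have "card ?I = card (Src q (Suc t)) + card (Crit q t)"
    using finite_Src finite_Crit card_image[OF inj_on_pivot_Src] by (simp add: card_Un_disjoint)
  ultimately show ?thesis by simp
qed

lemma mons_3_partition: "mons 3 q t = Src q t \<union> pivot ` Src q (Suc t) \<union> Crit q t"
proof (intro equalityI subsetI)
  fix m assume m: "m \<in> mons 3 q t"
  show "m \<in> Src q t \<union> pivot ` Src q (Suc t) \<union> Crit q t"
  proof (cases "is_src m \<or> is_crit m")
    case False
    then have u: "unpivot m \<in> Mons3" "is_src (unpivot m)" "pivot (unpivot m) = m"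
      using m unpivot_matched by (auto simp: mons_3_eq)
    then have "unpivot m \<in> Src q (Suc t)"
      using pivot_Mons3[OF u(1,2)] m by (auto simp: Src_def mons_3_eq)
    then show ?thesis using u(3) by (metis UnI1 UnI2 image_eqI)
  qed (use m in \<open>auto simp: Src_def Crit_def\<close>)
qed (use pivot_Src in \<open>auto simp: Src_def Crit_def\<close>)

lemma card_mons_3: "card (mons 3 q t) = card (Src q t) + card (Src q (Suc t)) + card (Crit q t)"
proof -
  have "Src q t \<inter> pivot ` Src q (Suc t) = {}" "(Src q t \<union> pivot ` Src q (Suc t)) \<inter> Crit q t = {}"
    using pivot_Src src_not_crit by (fastforce simp: Src_def Crit_def mons_3_eq)+
  then show ?thesis
    using finite_Src finite_Crit card_image[OF inj_on_pivot_Src]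
    by (simp add: mons_3_partition card_Un_disjoint)
qed

lemma dim_cycles: "V.dim (cycles q t) = card (Src q (Suc t)) + card (Crit q t)"
  and dim_boundaries: "V.dim (d2 ` Apiece 3 q t) = card (Src q t)"
proof -
  \<comment> \<open>rank-nullity squeezes both lower bounds into equalities\<close>
  have "V.dim (cycles q t) + V.dim (d2 ` Apiece 3 q t) \<le> card (mons 3 q t)"
    using dim_cycles_add_dim_boundaries_le[OF finite_mons_3]
    by (simp add: cycles_def Apiece_eq_supported_on)
  then show "V.dim (cycles q t) = card (Src q (Suc t)) + card (Crit q t)"
    and "V.dim (d2 ` Apiece 3 q t) = card (Src q t)"
    using card_mons_3[of q t] card_le_dim_cycles[of q t] card_Src_le_dim_boundaries[of q t]
    by linarith+
qed

lemma dimKh_3: "dimKh 3 q t = card (Crit q t)"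
  using dim_cycles[of q t] dim_boundaries[of q "Suc t"] by (simp add: dimKh_def cycles_def)

section \<open>The Poincar\'e series\<close>

definition mul_x2 :: "mon \<Rightarrow> mon" where
  "mul_x2 m = (expv (fst m 0) (fst m 1) (Suc (fst m 2)), snd m)"

lemma mul_x2_expv [simp]: "mul_x2 (expv a b c, S) = (expv a b (Suc c), S)"
  by (simp add: mul_x2_def)

lemma inj_on_mul_x2: "inj_on mul_x2 Mons3"
proof (rule inj_onI)
  fix m m' assume "m \<in> Mons3" "m' \<in> Mons3" "mul_x2 m = mul_x2 m'"
  then show "m = m'" by (metis Mons3_cases mul_x2_expv expv_eq_iff prod.inject Suc_inject)
qed

lemma Crit_x2_eq: "{m\<in>Crit (q + 6) (t + 4). fst m 2 \<noteq> 0} = mul_x2 ` Crit q t"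
proof (intro equalityI subsetI)
  fix m assume "m \<in> {m\<in>Crit (q + 6) (t + 4). fst m 2 \<noteq> 0}"
  then have m: "m \<in> Mons3" "is_crit m" "qdeg m = q + 6" "tdeg m = t + 4" "fst m 2 \<noteq> 0"
    by (auto simp: Crit_def mons_3_eq)
  obtain a b c S where abc: "m = (expv a b c, S)" "S \<subseteq> {..<3}" using m(1) by (rule Mons3_cases)
  then obtain c' where "c = Suc c'" using m(5) by (cases c) auto
  then have "(expv a b c', S) \<in> Crit q t" "m = mul_x2 (expv a b c', S)"
    using m abc by (auto simp: Crit_def mons_3_eq is_crit_def qdeg_expv tdeg_expv)
  then show "m \<in> mul_x2 ` Crit q t" by blast
next
  fix m assume "m \<in> mul_x2 ` Crit q t"
  then obtain p where p: "p \<in> Mons3" "is_crit p" "qdeg p = q" "tdeg p = t" "m = mul_x2 p"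
    by (auto simp: Crit_def mons_3_eq)
  obtain a b c S where "p = (expv a b c, S)" "S \<subseteq> {..<3}" using p(1) by (rule Mons3_cases)
  then show "m \<in> {m\<in>Crit (q + 6) (t + 4). fst m 2 \<noteq> 0}"
    using p by (auto simp: Crit_def mons_3_eq is_crit_def qdeg_expv tdeg_expv)
qed

lemma Crit_x2_small:
  assumes "q < 6 \<or> t < 4"
  shows "{m\<in>Crit q t. fst m 2 \<noteq> 0} = {}"
proof -
  have "qdeg m \<ge> 6 \<and> tdeg m \<ge> 4" if "m \<in> Mons3" "fst m 2 \<noteq> 0" for m
    using that by (cases rule: Mons3_cases[OF that(1)]) (auto simp: qdeg_expv tdeg_expv)
  then show ?thesis using assms by (fastforce simp: Crit_def mons_3_eq)
qed

definition crit_base :: "mon set" where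
  "crit_base = {(expv 0 0 0, {}), (expv 1 0 0, {}), (expv 0 1 0, {}), (expv 0 1 0, {0}),
    (expv 0 1 0, {1}), (expv 1 1 0, {1})}"

lemma Crit_x2_free: "{m\<in>Crit q t. fst m 2 = 0} = {h\<in>crit_base. qdeg h = q \<and> tdeg h = t}"
proof -
  have "m \<in> crit_base \<longleftrightarrow> m \<in> Mons3 \<and> is_crit m \<and> fst m 2 = 0" for m
  proof
    assume "m \<in> Mons3 \<and> is_crit m \<and> fst m 2 = 0"
    moreover obtain a b c S where "m = (expv a b c, S)" "S \<subseteq> {..<3}"
      using calculation by (auto elim: Mons3_cases)
    ultimately show "m \<in> crit_base"
      using subset_lessThan_3_cases[of S] by (auto simp: crit_base_def is_crit_def)
  qed (auto simp: crit_base_def is_crit_def)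
  then show ?thesis by (auto simp: Crit_def mons_3_eq)
qed

definition crit_base_degrees :: "(nat \<times> nat) set" where
  "crit_base_degrees = {(0, 0), (2, 0), (4, 2), (8, 3), (10, 5), (12, 5)}"

lemma card_Crit_x2_free: "card {m\<in>Crit q t. fst m 2 = 0} = of_bool ((q, t) \<in> crit_base_degrees)"
proof -
  let ?deg = "\<lambda>h. (qdeg h, tdeg h)"
  have inj: "inj_on ?deg crit_base" and img: "?deg ` crit_base = crit_base_degrees"
    by (simp_all add: crit_base_def crit_base_degrees_def qdeg_expv tdeg_expv)
  show ?thesis
  proof (cases "(q, t) \<in> crit_base_degrees")
    case True
    then obtain h where h: "h \<in> crit_base" "?deg h = (q, t)" using img by force
    then have one: "{h\<in>crit_base. qdeg h = q \<and> tdeg h = t} = {h}" using inj by (auto dest: inj_onD)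
    show ?thesis unfolding Crit_x2_free one using True by simp
  next
    case False
    then have none: "{h\<in>crit_base. qdeg h = q \<and> tdeg h = t} = {}" using img by force
    show ?thesis unfolding Crit_x2_free none using False by simp
  qed
qed

lemma card_Crit:
  "card (Crit q t) = of_bool ((q, t) \<in> crit_base_degrees)
     + (if 6 \<le> q \<and> 4 \<le> t then card (Crit (q - 6) (t - 4)) else 0)"
proof -
  have "Crit q t = {m\<in>Crit q t. fst m 2 = 0} \<union> {m\<in>Crit q t. fst m 2 \<noteq> 0}" by auto
  then have "card (Crit q t) = card {m\<in>Crit q t. fst m 2 = 0} + card {m\<in>Crit q t. fst m 2 \<noteq> 0}"
    using finite_Crit
    by (metis (no_types, lifting) card_Un_disjoint disjoint_iff finite_Un mem_Collect_eq)
  moreover have "card {m\<in>Crit q t. fst m 2 \<noteq> 0} =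
      (if 6 \<le> q \<and> 4 \<le> t then card (Crit (q - 6) (t - 4)) else 0)"
  proof (cases "6 \<le> q \<and> 4 \<le> t")
    case True
    have "inj_on mul_x2 (Crit (q - 6) (t - 4))"
      by (rule inj_on_subset[OF inj_on_mul_x2]) (auto simp: Crit_def mons_3_eq)
    then show ?thesis using True Crit_x2_eq[of "q - 6" "t - 4"] by (simp add: card_image)
  next
    case False
    then have "{m\<in>Crit q t. fst m 2 \<noteq> 0} = {}" by (intro Crit_x2_small) auto
    then show ?thesis using False by (simp only: card.empty if_False)
  qed
  ultimately show ?thesis by (simp add: card_Crit_x2_free)
qed

unbundle fps_syntax

definition numer :: "rat fps fps" where
  "numer = 1 + qvar^2 + qvar^4 * tvar^2 + qvar^8 * tvar^3 + qvar^10 * tvar^5 + qvar^12 * tvar^5"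

lemma PoincareKh_3_nth: "PoincareKh 3 $ a $ b = of_nat (card (Crit a b))"
  by (simp add: PoincareKh_def dimKh_3)

lemma numer_nth: "numer $ a $ b = of_bool ((a, b) \<in> crit_base_degrees)"
  by (simp add: numer_def qvar_def tvar_def crit_base_degrees_def fps_X_power_mult_right_nth)

lemma PoincareKh_3_mult: "PoincareKh 3 * (1 - qvar^6 * tvar^4) = numer"
proof (rule fps_ext, rule fps_ext)
  fix a b
  let ?P = "PoincareKh 3"
  have "?P * (1 - qvar^6 * tvar^4) = ?P - fps_X^6 * (?P * fps_const (fps_X^4))"
    by (simp add: qvar_def tvar_def algebra_simps)
  then have "(?P * (1 - qvar^6 * tvar^4)) $ a $ b =
      ?P $ a $ b - (if 6 \<le> a \<and> 4 \<le> b then ?P $ (a - 6) $ (b - 4) else 0)"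
    by (auto simp: fps_X_power_mult_nth fps_X_power_mult_right_nth)
  also have "\<dots> = numer $ a $ b"
    unfolding PoincareKh_3_nth numer_nth using card_Crit[of a b] by simp
  finally show "(?P * (1 - qvar^6 * tvar^4)) $ a $ b = numer $ a $ b" .
qed

lemma numer_eq:
  "numer = (1 + qvar^10 * tvar^5) * (1 + qvar^2 + qvar^4 * tvar^2)
    + qvar^8 * tvar^3 * (1 - qvar^6 * tvar^4)"
  unfolding numer_def by algebra

lemma denom_inverse: "(1 - qvar^6 * tvar^4) * inverse (1 - qvar^6 * tvar^4) = 1"
proof -
  define D :: "rat fps fps" where "D = 1 - qvar^6 * tvar^4"
  have "D $ 0 = 1" by (simp add: D_def qvar_def tvar_def fps_X_power_mult_nth)
  then have "D * fps_right_inverse D (inverse (D $ 0)) = 1" by (intro fps_right_inverse) simp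
  then show ?thesis by (simp only: D_def[symmetric] fps_inverse_def)
qed

theorem mainTheorem4:
  shows "PoincareKh 3 =
    (1 + qvar^10 * tvar^5) * (1 + qvar^2 + qvar^4 * tvar^2) * inverse (1 - qvar^6 * tvar^4)
    + qvar^8 * tvar^3"
proof -
  let ?D = "1 - qvar^6 * tvar^4"
  have "PoincareKh 3 = PoincareKh 3 * ?D * inverse ?D"
    using denom_inverse by (simp add: mult.assoc)
  also have "\<dots> = ((1 + qvar^10 * tvar^5) * (1 + qvar^2 + qvar^4 * tvar^2) + qvar^8 * tvar^3 * ?D)
      * inverse ?D"
    by (simp only: PoincareKh_3_mult numer_eq)
  also have "\<dots> = (1 + qvar^10 * tvar^5) * (1 + qvar^2 + qvar^4 * tvar^2) * inverse ?D
      + qvar^8 * tvar^3 * (?D * inverse ?D)"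
    by (simp add: algebra_simps)
  finally show ?thesis by (simp add: denom_inverse)
qed

end
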